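(* Let $H\in\mathbb{R}^{N\times n}$ with $H^TH$ symmetric positive semidefinite (possibly singular), and let $R\in\mathbb{R}^{n\times n}$ be symmetric positive definite. Define $F(R)=H^TH(H^TH+R)^{-1}$, and for each integer $c\ge0$ define $$F_{aim}(H,R,c)=(H^TH+R)^{-1}\sum_{i=0}^cF(R)^i,\qquad F_{ar}(R)=(H^TH)^{\dagger}-F_{aim}(H,R,c).$$ Then $$\lim_{c\to+\infty}F_{ar}(R)=(H^TH)^{\dagger}-R^{-1}.$$
   Context: $(H^TH)^{\dagger}$ denotes the Moore–Penrose pseudo-inverse of $H^TH$. *)

theory Defs
  imports "HOL-Analysis.Analysis"
begin

primrec mat_pow :: "'a::comm_ring_1^'n^'n \<Rightarrow> nat \<Rightarrow> 'a^'n^'n" where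
  "mat_pow A 0 = mat 1"
| "mat_pow A (Suc k) = A ** mat_pow A k"

definition moore_penrose_pinv :: "real^'n^'m \<Rightarrow> real^'m^'n" where
  "moore_penrose_pinv A = (THE X. A ** X ** A = A \<and> X ** A ** X = X \<and>
       transpose (A ** X) = A ** X \<and> transpose (X ** A) = X ** A)"

definition sym_psd :: "real^'n^'n \<Rightarrow> bool" where
  "sym_psd A \<longleftrightarrow> transpose A = A \<and> (\<forall>x. 0 \<le> x \<bullet> (A *v x))"

definition sym_pd :: "real^'n^'n \<Rightarrow> bool" where
  "sym_pd A \<longleftrightarrow> transpose A = A \<and> (\<forall>x. x \<noteq> 0 \<longrightarrow> 0 < x \<bullet> (A *v x))"

end

theory Submission
  imports Defs
begin

(* Write A = H^T H, M = A + R and G = M^-1 A. Since M^-1 (A M^-1)^i = G^i M^-1 and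
   I - G = M^-1 R, the partial sums have the closed form R^-1 M (I - G^(c+1)) M^-1, so it
   suffices that G^k tends to 0. For y = G x and z = x - y one has A z = R y, hence
   x.Mx = y.My + z.Mz + 2 (y.Ry + z.Az) >= y.My + z.Mz, and z = M^-1 R x is nonzero for
   nonzero x: G strictly decreases the energy x.Mx, uniformly by compactness of the unit
   sphere. *)

lemma matrix_add_rdistrib:
  fixes A B :: "'a::semiring_1^'n^'m"
  shows "(A + B) ** C = A ** C + B ** C"
  by (simp add: matrix_matrix_mult_def vec_eq_iff sum.distrib ring_distribs)

lemma matrix_diff_ldistrib:
  fixes A :: "'a::ring_1^'n^'m"
  shows "A ** (B - C) = A ** B - A ** C"
  by (simp add: matrix_matrix_mult_def vec_eq_iff sum_subtractf ring_distribs)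

lemma matrix_diff_rdistrib:
  fixes A B :: "'a::ring_1^'n^'m"
  shows "(A - B) ** C = A ** C - B ** C"
  by (simp add: matrix_matrix_mult_def vec_eq_iff sum_subtractf ring_distribs)

lemma matrix_mult_sum_left: "A ** sum f S = (\<Sum>i\<in>S. A ** f i)"
  by (induction S rule: infinite_finite_induct) (simp_all add: matrix_add_ldistrib)

lemma matrix_mult_sum_right: "sum f S ** A = (\<Sum>i\<in>S. f i ** A)"
  by (induction S rule: infinite_finite_induct) (simp_all add: matrix_add_rdistrib)

lemma transpose_add: "transpose (A + B) = transpose A + transpose B"
  by (simp add: transpose_def vec_eq_iff)

lemma matrix_inv_right: "invertible A \<Longrightarrow> A ** matrix_inv A = mat 1"
  unfolding invertible_def matrix_inv_def by (rule someI2_ex) auto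

lemma matrix_inv_left: "invertible A \<Longrightarrow> matrix_inv A ** A = mat 1"
  unfolding invertible_def matrix_inv_def by (rule someI2_ex) auto

lemma mat_pow_geometric_sum:
  "(mat 1 - G) ** (\<Sum>i\<in>{0..c}. mat_pow G i) = mat 1 - mat_pow (G::'a::comm_ring_1^'n^'n) (Suc c)"
proof (induction c)
  case 0
  show ?case by (simp add: matrix_diff_rdistrib)
next
  case (Suc c)
  then show ?case
    by (simp add: matrix_add_ldistrib matrix_diff_rdistrib matrix_mul_assoc del: mat_pow.simps)
       (simp add: matrix_mul_assoc)
qed

lemma mat_pow_mult_commute:
  "B ** mat_pow (A ** B) k = mat_pow (B ** A) k ** (B::'a::comm_ring_1^'n^'n)"
proof (induction k)
  case (Suc k)
  have "B ** mat_pow (A ** B) (Suc k) = (B ** A) ** (B ** mat_pow (A ** B) k)"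
    by (simp add: matrix_mul_assoc)
  then show ?case by (simp add: Suc.IH matrix_mul_assoc)
qed simp

lemma resolvent_partial_sum:
  fixes A R :: "'a::comm_ring_1^'n^'n"
  assumes "invertible (A + R)" and "invertible R"
  shows "matrix_inv (A + R) ** (\<Sum>i\<in>{0..c}. mat_pow (A ** matrix_inv (A + R)) i)
       = matrix_inv R ** (A + R) ** (mat 1 - mat_pow (matrix_inv (A + R) ** A) (Suc c))
         ** matrix_inv (A + R)"
proof -
  define M where "M = A + R"
  define G where "G = matrix_inv M ** A"
  have inverse_of_resolvent: "matrix_inv R ** M ** (mat 1 - G) = mat 1"
  proof -
    have "matrix_inv R ** M ** (mat 1 - G) = matrix_inv R ** (M - M ** matrix_inv M ** A)"
      by (simp add: G_def matrix_diff_ldistrib matrix_mul_assoc)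
    also have "\<dots> = matrix_inv R ** R"
      using assms(1) by (simp add: M_def matrix_inv_right)
    finally show ?thesis using assms(2) by (simp add: matrix_inv_left)
  qed
  have "matrix_inv M ** (\<Sum>i\<in>{0..c}. mat_pow (A ** matrix_inv M) i)
      = (\<Sum>i\<in>{0..c}. mat_pow G i) ** matrix_inv M"
    by (simp add: matrix_mult_sum_left matrix_mult_sum_right mat_pow_mult_commute G_def)
  also have "(\<Sum>i\<in>{0..c}. mat_pow G i)
      = matrix_inv R ** M ** ((mat 1 - G) ** (\<Sum>i\<in>{0..c}. mat_pow G i))"
    by (simp add: matrix_mul_assoc inverse_of_resolvent)
  finally show ?thesis by (simp add: mat_pow_geometric_sum M_def G_def)
qed

definition quadratic_form :: "real^'n^'n \<Rightarrow> real^'n \<Rightarrow> real" where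
  "quadratic_form M x = x \<bullet> (M *v x)"

lemma quadratic_form_scaleR: "quadratic_form M (t *\<^sub>R x) = t\<^sup>2 * quadratic_form M x"
  by (simp add: quadratic_form_def matrix_vector_mult_scaleR power2_eq_square)

lemma continuous_on_quadratic_form [continuous_intros]:
  "continuous_on S f \<Longrightarrow> continuous_on S (\<lambda>x. quadratic_form M (f x))"
proof -
  assume f: "continuous_on S f"
  then have "continuous_on S (\<lambda>x. M *v f x)"
    using continuous_on_compose[OF _ matrix_vector_mult_linear_continuous_on] by (auto simp: o_def)
  with f show ?thesis
    unfolding quadratic_form_def by (rule continuous_on_inner)
qed

lemma quadratic_form_nonneg:
  assumes "\<And>x. x \<noteq> 0 \<Longrightarrow> 0 < quadratic_form M x"
  shows "0 \<le> quadratic_form M x"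
  using assms[of x] by (cases "x = 0") (auto simp: quadratic_form_def)

lemma le_if_le_on_sphere_homogeneous:
  fixes f g :: "'a::real_normed_vector \<Rightarrow> real"
  assumes f: "\<And>t x. f (t *\<^sub>R x) = t\<^sup>2 * f x" and g: "\<And>t x. g (t *\<^sub>R x) = t\<^sup>2 * g x"
    and sphere: "\<And>v. norm v = 1 \<Longrightarrow> f v \<le> g v"
  shows "f x \<le> g x"
proof (cases "x = 0")
  case True
  then show ?thesis using f[of 0 0] g[of 0 0] by simp
next
  case False
  define v where "v = (1 / norm x) *\<^sub>R x"
  have x: "x = norm x *\<^sub>R v" and "norm v = 1" using False by (simp_all add: v_def)
  have "f x = (norm x)\<^sup>2 * f v" by (subst x) (rule f)
  also have "\<dots> \<le> (norm x)\<^sup>2 * g v" using sphere[OF \<open>norm v = 1\<close>] by (simp add: mult_left_mono)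
  also have "\<dots> = g x" by (subst (2) x) (rule g[symmetric])
  finally show ?thesis .
qed

lemma pd_quadratic_form_lower_bound:
  assumes pd: "\<And>x. x \<noteq> 0 \<Longrightarrow> 0 < quadratic_form M x"
  obtains c where "c > 0" and "\<And>x. c * (norm x)\<^sup>2 \<le> quadratic_form M x"
proof -
  have "\<exists>u\<in>sphere 0 1. \<forall>v\<in>sphere 0 1. quadratic_form M u \<le> quadratic_form M v"
    using continuous_on_quadratic_form[OF continuous_on_id]
    by (intro continuous_attains_inf[OF compact_sphere]) simp_all
  then obtain u where u: "u \<in> sphere 0 1"
    and min: "\<And>v. v \<in> sphere 0 1 \<Longrightarrow> quadratic_form M u \<le> quadratic_form M v"
    by blast
  have "quadratic_form M u * (norm x)\<^sup>2 \<le> quadratic_form M x" for x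
    by (rule le_if_le_on_sphere_homogeneous[where f = "\<lambda>x. quadratic_form M u * (norm x)\<^sup>2"])
       (auto simp: quadratic_form_scaleR power_mult_distrib min)
  moreover have "quadratic_form M u > 0" using u pd by (metis mem_sphere_0 norm_zero zero_neq_one)
  ultimately show ?thesis using that by blast
qed

lemma quadratic_form_uniform_contraction:
  assumes pd: "\<And>x. x \<noteq> 0 \<Longrightarrow> 0 < quadratic_form M x"
    and decreasing: "\<And>x. x \<noteq> 0 \<Longrightarrow> quadratic_form M (G *v x) < quadratic_form M x"
  obtains q where "0 \<le> q" and "q < 1"
    and "\<And>x. quadratic_form M (G *v x) \<le> q * quadratic_form M x"
proof -
  define ratio where "ratio x = quadratic_form M (G *v x) / quadratic_form M x" for x
  have "quadratic_form M v \<noteq> 0" if "v \<in> sphere 0 1" for v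
    using pd[of v] that by (metis less_irrefl mem_sphere_0 norm_zero zero_neq_one)
  then have "continuous_on (sphere 0 1) ratio"
    unfolding ratio_def
    by (intro continuous_on_divide continuous_on_quadratic_form continuous_on_id
        matrix_vector_mult_linear_continuous_on ballI)
  then have "\<exists>u\<in>sphere 0 1. \<forall>v\<in>sphere 0 1. ratio v \<le> ratio u"
    by (intro continuous_attains_sup[OF compact_sphere]) simp_all
  then obtain u where u: "u \<in> sphere 0 1"
    and max: "\<And>v. v \<in> sphere 0 1 \<Longrightarrow> ratio v \<le> ratio u"
    by blast
  have "quadratic_form M (G *v x) \<le> ratio u * quadratic_form M x" for x
  proof (rule le_if_le_on_sphere_homogeneous[where f = "\<lambda>x. quadratic_form M (G *v x)"])
    fix v :: "real^'a" assume "norm v = 1"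
    then have "0 < quadratic_form M v" and "0 < quadratic_form M u"
      using u pd by (metis mem_sphere_0 norm_zero zero_neq_one)+
    then show "quadratic_form M (G *v v) \<le> ratio u * quadratic_form M v"
      using max[of v] \<open>norm v = 1\<close> by (simp add: ratio_def field_simps)
  qed (simp_all add: quadratic_form_scaleR matrix_vector_mult_scaleR)
  moreover have "u \<noteq> 0" using u by (metis mem_sphere_0 norm_zero zero_neq_one)
  then have "0 \<le> ratio u" and "ratio u < 1"
    using pd[of u] decreasing[of u] quadratic_form_nonneg[OF pd, of "G *v u"]
    by (simp_all add: ratio_def)
  ultimately show ?thesis using that by blast
qed

lemma tendsto_matrix_mult [tendsto_intros]:
  fixes X :: "'b \<Rightarrow> 'a::real_normed_algebra_1^'n^'m" and Y :: "'b \<Rightarrow> 'a^'p^'n"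
  assumes "(X \<longlongrightarrow> A) F" and "(Y \<longlongrightarrow> B) F"
  shows "((\<lambda>t. X t ** Y t) \<longlongrightarrow> A ** B) F"
  unfolding matrix_matrix_mult_def
  by (intro vec_tendstoI, simp, intro tendsto_sum tendsto_mult tendsto_vec_nth assms)

lemma matrix_tendsto_zero_if_mult_vec_tendsto_zero:
  fixes X :: "'b \<Rightarrow> 'a::real_normed_algebra_1^'n^'m"
  assumes "\<And>x. ((\<lambda>t. X t *v x) \<longlongrightarrow> 0) F"
  shows "(X \<longlongrightarrow> 0) F"
proof (intro vec_tendstoI)
  fix i j
  have "(X t *v axis j 1) $ i = X t $ i $ j" for t
    by (simp add: matrix_vector_mult_def axis_def if_distrib if_distribR cong: if_cong)
  then show "((\<lambda>t. X t $ i $ j) \<longlongrightarrow> 0 $ i $ j) F"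
    using tendsto_vec_nth[OF assms[of "axis j 1"], of i] by simp
qed

lemma mat_pow_tendsto_zero_if_form_decreasing:
  fixes M G :: "real^'n^'n"
  assumes pd: "\<And>x. x \<noteq> 0 \<Longrightarrow> 0 < quadratic_form M x"
    and decreasing: "\<And>x. x \<noteq> 0 \<Longrightarrow> quadratic_form M (G *v x) < quadratic_form M x"
  shows "(\<lambda>k. mat_pow G k) \<longlonglongrightarrow> 0"
proof (rule matrix_tendsto_zero_if_mult_vec_tendsto_zero)
  fix x
  obtain c where c: "c > 0" and lower: "\<And>x. c * (norm x)\<^sup>2 \<le> quadratic_form M x"
    using pd_quadratic_form_lower_bound[OF pd] by blast
  obtain q where q: "0 \<le> q" "q < 1"
    and contraction: "\<And>x. quadratic_form M (G *v x) \<le> q * quadratic_form M x"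
    using quadratic_form_uniform_contraction[OF pd decreasing] by blast
  have pow: "quadratic_form M (mat_pow G k *v x) \<le> q ^ k * quadratic_form M x" for k
  proof (induction k)
    case (Suc k)
    have "quadratic_form M (mat_pow G (Suc k) *v x) \<le> q * quadratic_form M (mat_pow G k *v x)"
      using contraction by (simp flip: matrix_vector_mul_assoc)
    also have "\<dots> \<le> q * (q ^ k * quadratic_form M x)" using Suc q by (simp add: mult_left_mono)
    finally show ?case by simp
  qed simp
  show "(\<lambda>k. mat_pow G k *v x) \<longlonglongrightarrow> 0"
  proof (rule Lim_null_comparison)
    show "\<forall>\<^sub>F k in sequentially. norm (mat_pow G k *v x) \<le> sqrt (q ^ k * (quadratic_form M x / c))"
    proof (intro always_eventually allI)
      fix k
      have "(norm (mat_pow G k *v x))\<^sup>2 \<le> q ^ k * (quadratic_form M x / c)"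
        using order_trans[OF lower pow] c by (simp add: field_simps)
      then show "norm (mat_pow G k *v x) \<le> sqrt (q ^ k * (quadratic_form M x / c))"
        by (simp add: real_le_rsqrt)
    qed
    have "(\<lambda>k. q ^ k * (quadratic_form M x / c)) \<longlonglongrightarrow> 0 * (quadratic_form M x / c)"
      using q by (intro tendsto_intros LIMSEQ_power_zero) auto
    then show "(\<lambda>k. sqrt (q ^ k * (quadratic_form M x / c))) \<longlonglongrightarrow> 0"
      using tendsto_real_sqrt by fastforce
  qed
qed

lemma inner_matrix_vector_sym:
  fixes S :: "real^'n^'n"
  assumes "transpose S = S"
  shows "u \<bullet> (S *v v) = v \<bullet> (S *v u)"
proof -
  have "u \<bullet> (S *v v) = (u v* S) \<bullet> v" by (rule dot_lmul_matrix[symmetric])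
  also have "u v* S = S *v u" using vector_transpose_matrix[of u S] assms by simp
  finally show ?thesis by (simp add: inner_commute)
qed

lemma quadratic_form_add:
  assumes "transpose M = M"
  shows "quadratic_form M (y + z) = quadratic_form M y + 2 * (y \<bullet> (M *v z)) + quadratic_form M z"
  using inner_matrix_vector_sym[OF assms, of z y]
  by (simp add: quadratic_form_def matrix_vector_right_distrib inner_add_left inner_add_right)

lemma sym_pd_imp_sym_psd: "sym_pd A \<Longrightarrow> sym_psd A"
  unfolding sym_pd_def sym_psd_def
  by (metis inner_zero_left less_imp_le order_refl)

lemma sym_psd_add_sym_pd: "sym_psd A \<Longrightarrow> sym_pd R \<Longrightarrow> sym_pd (A + R)"
  unfolding sym_pd_def sym_psd_def
  by (simp add: transpose_add matrix_vector_mult_add_rdistrib inner_add_right add_nonneg_pos)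

lemma sym_pd_invertible:
  assumes "sym_pd A"
  shows "invertible A"
proof -
  have "A *v x = 0 \<Longrightarrow> x = 0" for x
    using assms unfolding sym_pd_def by (metis inner_zero_right less_irrefl)
  then show ?thesis using matrix_left_invertible_ker invertible_left_inverse by blast
qed

lemma resolvent_energy_decrease:
  fixes A R :: "real^'n^'n"
  assumes A: "sym_psd A" and R: "sym_psd R" and M: "invertible (A + R)"
  defines "G \<equiv> matrix_inv (A + R) ** A"
  shows "quadratic_form (A + R) (G *v x) + quadratic_form (A + R) (x - G *v x)
       \<le> quadratic_form (A + R) x"
proof -
  define y where "y = G *v x"
  define z where "z = x - y"
  have "(A + R) *v y = A *v x"
    using M by (simp add: y_def G_def matrix_vector_mul_assoc matrix_mul_assoc matrix_inv_right)
  then have "A *v z = (A + R) *v y - A *v y"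
    by (simp add: z_def matrix_vector_mult_diff_distrib)
  then have Az: "A *v z = R *v y"
    by (simp add: matrix_vector_mult_add_rdistrib)
  have "y \<bullet> ((A + R) *v z) = y \<bullet> (A *v z) + z \<bullet> (R *v y)"
    using R inner_matrix_vector_sym[of R y z]
    by (simp add: sym_psd_def matrix_vector_mult_add_rdistrib inner_add_right)
  also have "\<dots> = y \<bullet> (R *v y) + z \<bullet> (A *v z)" by (simp add: Az)
  finally have "y \<bullet> ((A + R) *v z) \<ge> 0" using A R unfolding sym_psd_def by simp
  moreover have "quadratic_form (A + R) x
      = quadratic_form (A + R) y + 2 * (y \<bullet> ((A + R) *v z)) + quadratic_form (A + R) z"
    using A R quadratic_form_add[of "A + R" y z]
    by (simp add: z_def sym_psd_def transpose_add)
  ultimately show ?thesis by (simp add: y_def z_def)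
qed

lemma resolvent_pow_tendsto_zero:
  fixes A R :: "real^'n^'n"
  assumes A: "sym_psd A" and R: "sym_pd R"
  shows "(\<lambda>k. mat_pow (matrix_inv (A + R) ** A) k) \<longlonglongrightarrow> 0"
proof (rule mat_pow_tendsto_zero_if_form_decreasing)
  have M: "sym_pd (A + R)" using A R by (rule sym_psd_add_sym_pd)
  then show pd: "0 < quadratic_form (A + R) x" if "x \<noteq> 0" for x
    using that by (simp add: sym_pd_def quadratic_form_def)
  fix x :: "real^'n" assume "x \<noteq> 0"
  define G where "G = matrix_inv (A + R) ** A"
  have "(A + R) *v (x - G *v x) = R *v x"
    using sym_pd_invertible[OF M]
    by (simp add: G_def matrix_vector_mul_assoc matrix_mul_assoc matrix_inv_right
        matrix_vector_mult_diff_distrib matrix_vector_mult_add_rdistrib)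
  moreover have "R *v x \<noteq> 0"
    using R \<open>x \<noteq> 0\<close> unfolding sym_pd_def by (metis inner_zero_right less_irrefl)
  ultimately have "0 < quadratic_form (A + R) (x - G *v x)"
    using pd by (metis matrix_vector_mult_0_right)
  then show "quadratic_form (A + R) (G *v x) < quadratic_form (A + R) x"
    using resolvent_energy_decrease[OF A sym_pd_imp_sym_psd[OF R] sym_pd_invertible[OF M], of x]
    unfolding G_def by linarith
qed

theorem theorem3:
  fixes H :: "real^'n^'N" and R :: "real^'n^'n"
  assumes "sym_psd (transpose H ** H)"
    and "sym_pd R"
  shows "(\<lambda>c. moore_penrose_pinv (transpose H ** H)
            - matrix_inv (transpose H ** H + R) **
              (\<Sum>i\<in>{0..c}. mat_pow (transpose H ** H ** matrix_inv (transpose H ** H + R)) i))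
         \<longlonglongrightarrow> moore_penrose_pinv (transpose H ** H) - matrix_inv R"
proof -
  define A where "A = transpose H ** H"
  define M where "M = A + R"
  define G where "G = matrix_inv M ** A"
  have M_invertible: "invertible M"
    using assms by (simp add: M_def A_def sym_pd_invertible sym_psd_add_sym_pd)
  have R_invertible: "invertible R" using assms(2) by (rule sym_pd_invertible)
  have "(\<lambda>c. matrix_inv R ** M ** (mat 1 - mat_pow G (Suc c)) ** matrix_inv M)
      \<longlonglongrightarrow> matrix_inv R ** M ** (mat 1 - 0) ** matrix_inv M"
    using resolvent_pow_tendsto_zero[OF assms[folded A_def]]
    by (intro tendsto_intros LIMSEQ_Suc) (simp add: G_def M_def)
  also have "matrix_inv R ** M ** (mat 1 - 0) ** matrix_inv M = matrix_inv R"
    using M_invertible by (simp add: matrix_inv_right flip: matrix_mul_assoc)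
  finally show ?thesis
    using resolvent_partial_sum[OF M_invertible[unfolded M_def] R_invertible]
    by (intro tendsto_diff tendsto_const) (simp_all add: A_def M_def G_def)
qed

end
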